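(* Let $a,b,q$ be complex numbers with $q\ne0$, and define $B_{n,k}(a,b)$ ($n\ge k\ge0$) by $$z^k=\sum_{n=k}^\infty B_{n,k}(a,b)\,z^n\frac{(az;q)_n}{(bz;q)_n}\qquad(k\ge0)$$ in $\mathbb{C}[[z]]$. Then for every integer $n\ge1$ (and $0\le k\le n$) and every $t\in\mathbb{C}$, $$B_{n,k}(at,bt)=B_{n,k}(a,b)\,t^{n-k},$$ and $$[z^{n}]\Big\{\frac{(bz;q)_{n-1}}{(az;q)_n}\Big\}=a\sum_{i=0}^{n-1}B_{n-i,1}(a,b)\,q^{(n-i)i}\,[z^{i}]\Big\{\frac{(bz;q)_i}{(az;q)_{i+1}}\Big\}.$$
   Context: $(x;q)_n=\prod_{j=0}^{n-1}(1-xq^j)$ for $n\ge0$, $(x;q)_0=1$; quotients are regarded as formal power series in $z$ and $[z^m]\{f\}$ denotes the coefficient of $z^m$. The family $\{z^n(az;q)_n/(bz;q)_n\}_{n\ge0}$ is a basis of $\mathbb{C}[[z]]$ in the formal sense, so the $B_{n,k}(a,b)$ are uniquely determined. *)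

theory Defs
  imports Complex_Main "HOL-Computational_Algebra.Formal_Power_Series"
begin

definition qpoch_fps :: "complex \<Rightarrow> complex \<Rightarrow> nat \<Rightarrow> complex fps" where
  "qpoch_fps x q n = (\<Prod>j<n. 1 - fps_const (x * q ^ j) * fps_X)"

definition basis_fps :: "complex \<Rightarrow> complex \<Rightarrow> complex \<Rightarrow> nat \<Rightarrow> complex fps" where
  "basis_fps a b q n = fps_X ^ n * qpoch_fps a q n * inverse (qpoch_fps b q n)"

text \<open>Since basis_fps a b q n has order n, the coefficient of z^m of the
  infinite sum is the finite sum over n = k..m.\<close>
definition is_B_family :: "complex \<Rightarrow> complex \<Rightarrow> complex \<Rightarrow> (nat \<Rightarrow> nat \<Rightarrow> complex) \<Rightarrow> bool" where
  "is_B_family a b q B \<longleftrightarrow>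
     (\<forall>k m. fps_nth (fps_X ^ k :: complex fps) m = (\<Sum>n=k..m. B n k * fps_nth (basis_fps a b q n) m))
     \<and> (\<forall>n k. n < k \<longrightarrow> B n k = 0)"

definition Bnk :: "complex \<Rightarrow> complex \<Rightarrow> complex \<Rightarrow> nat \<Rightarrow> nat \<Rightarrow> complex" where
  "Bnk a b q = (THE B. is_B_family a b q B)"

end

theory Submission
  imports Defs
begin

(* Substituting t z for z maps the (a, b)-basis element of index n to t^n times the
  (a t, b t)-basis element, so the coefficients of z^k rescale by t^(n - k).

  For the identity write R_p = (b z; q)_p / (a z; q)_(p+1), b_n = z^n (a z; q)_n / (b z; q)_n and
  W_p = trunc_p((b z; q)_p / (a z; q)_p) * (a z; q)_p / (b z; q)_p, with trunc_p dropping all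
  terms of degree > p. Then W_0 = 1, W_m = 1 mod z^(m+1), and
    W_(p+1) - W_p = [z^(p+1)] R_p * b_(p+1) - a q^p [z^p] R_p * z b_p,
  so telescoping makes sum_n [z^n] R_(n-1) b_n and a sum_p q^p [z^p] R_p z b_p agree up to
  every degree. As b_(p+j)(a, b) = b_p(a, b) b_j(a q^p, b q^p), expanding z in the
  (a q^p, b q^p)-basis and rescaling turns the latter into
  sum_n (a sum_i B_(n-i,1) q^((n-i) i) [z^i] R_i) b_n, and the expansion in the triangular
  basis is unique. *)

unbundle fps_syntax

lemma qpoch_fps_0 [simp]: "qpoch_fps x q 0 = 1"
  by (simp add: qpoch_fps_def)

lemma qpoch_fps_Suc:
  "qpoch_fps x q (Suc n) = qpoch_fps x q n * (1 - fps_const (x * q ^ n) * fps_X)"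
  by (simp add: qpoch_fps_def)

lemma qpoch_fps_nth_0 [simp]: "qpoch_fps x q n $ 0 = 1"
  by (induction n) (simp_all add: qpoch_fps_Suc)

lemma qpoch_fps_add: "qpoch_fps x q (m + n) = qpoch_fps x q m * qpoch_fps (x * q ^ m) q n"
  by (induction n) (simp_all add: qpoch_fps_Suc power_add mult_ac)

lemma qpoch_fps_compose_linear:
  "qpoch_fps x q n oo (fps_const t * fps_X) = qpoch_fps (x * t) q n"
  by (simp add: qpoch_fps_def fps_compose_prod_distrib fps_compose_sub_distrib
      fps_compose_mult_distrib mult_ac)

definition qpoch_ratio :: "complex \<Rightarrow> complex \<Rightarrow> complex \<Rightarrow> nat \<Rightarrow> complex fps" where
  "qpoch_ratio a b q n = qpoch_fps a q n * inverse (qpoch_fps b q n)"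

lemma qpoch_ratio_nth_0 [simp]: "qpoch_ratio a b q n $ 0 = 1"
  by (simp add: qpoch_ratio_def)

lemma qpoch_ratio_mult_swap: "qpoch_ratio a b q n * qpoch_ratio b a q n = 1"
proof -
  have "qpoch_ratio a b q n * qpoch_ratio b a q n
      = (qpoch_fps a q n * inverse (qpoch_fps a q n)) * (qpoch_fps b q n * inverse (qpoch_fps b q n))"
    by (simp add: qpoch_ratio_def mult_ac)
  then show ?thesis
    by (simp add: inverse_mult_eq_1')
qed

lemma qpoch_ratio_add:
  "qpoch_ratio a b q (m + n) = qpoch_ratio a b q m * qpoch_ratio (a * q ^ m) (b * q ^ m) q n"
  by (simp add: qpoch_ratio_def qpoch_fps_add fps_inverse_mult mult_ac)

lemma qpoch_ratio_Suc_mult: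
  "qpoch_ratio a b q (Suc n) * (1 - fps_const (b * q ^ n) * fps_X)
     = qpoch_ratio a b q n * (1 - fps_const (a * q ^ n) * fps_X)"
proof -
  have "qpoch_ratio a b q (Suc n) * (1 - fps_const (b * q ^ n) * fps_X)
      = qpoch_ratio a b q n * (1 - fps_const (a * q ^ n) * fps_X)
        * (inverse (1 - fps_const (b * q ^ n) * fps_X) * (1 - fps_const (b * q ^ n) * fps_X))"
    by (simp add: qpoch_ratio_def qpoch_fps_Suc fps_inverse_mult mult_ac)
  then show ?thesis
    by (simp add: inverse_mult_eq_1)
qed

lemma qpoch_ratio_compose_linear:
  "qpoch_ratio a b q n oo (fps_const t * fps_X) = qpoch_ratio (a * t) (b * t) q n"
  by (simp add: qpoch_ratio_def fps_compose_mult_distrib fps_inverse_compose qpoch_fps_compose_linear)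

lemma basis_fps_eq: "basis_fps a b q n = fps_X ^ n * qpoch_ratio a b q n"
  by (simp add: basis_fps_def qpoch_ratio_def mult.assoc)

lemma basis_fps_nth: "basis_fps a b q n $ m = (if m < n then 0 else qpoch_ratio a b q n $ (m - n))"
  by (simp add: basis_fps_eq fps_X_power_mult_nth)

lemma basis_fps_nth_self [simp]: "basis_fps a b q n $ n = 1"
  by (simp add: basis_fps_nth)

lemma basis_fps_add:
  "basis_fps a b q (m + n) = basis_fps a b q m * basis_fps (a * q ^ m) (b * q ^ m) q n"
  by (simp add: basis_fps_eq qpoch_ratio_add power_add mult_ac)

lemma basis_fps_scale_nth: "basis_fps (a * t) (b * t) q n $ m = t ^ (m - n) * basis_fps a b q n $ m"
  by (simp flip: qpoch_ratio_compose_linear add: basis_fps_nth)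

lemma basis_expansion_unique:
  assumes expansion:
      "\<And>m. (\<Sum>n=k..m. c n * basis_fps a b q n $ m) = (\<Sum>n=k..m. d n * basis_fps a b q n $ m)"
    and "k \<le> n"
  shows "c n = d n"
  using \<open>k \<le> n\<close>
proof (induction n rule: less_induct)
  case (less n)
  have split:
      "(\<Sum>j=k..n. f j * basis_fps a b q j $ n) = f n + (\<Sum>j=k..<n. f j * basis_fps a b q j $ n)"
    for f :: "nat \<Rightarrow> complex"
    using less.prems by (simp add: sum.last_plus)
  have "(\<Sum>j=k..<n. c j * basis_fps a b q j $ n) = (\<Sum>j=k..<n. d j * basis_fps a b q j $ n)"
    using less.IH by (intro sum.cong) auto
  with expansion[of n] show ?case
    by (simp add: split)
qed

function Bnk_rec :: "complex \<Rightarrow> complex \<Rightarrow> complex \<Rightarrow> nat \<Rightarrow> nat \<Rightarrow> complex" where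
  "Bnk_rec a b q n k = (if n < k then 0
     else fps_X ^ k $ n - (\<Sum>j=k..<n. Bnk_rec a b q j k * basis_fps a b q j $ n))"
  by auto
termination by (relation "measure (\<lambda>(a, b, q, n, k). n)") auto

declare Bnk_rec.simps [simp del]

lemma is_B_family_Bnk_rec: "is_B_family a b q (Bnk_rec a b q)"
  unfolding is_B_family_def
proof (intro conjI allI impI)
  fix k m :: nat
  show "fps_X ^ k $ m = (\<Sum>n=k..m. Bnk_rec a b q n k * basis_fps a b q n $ m)"
  proof (cases "m < k")
    case False
    then have "(\<Sum>n=k..m. Bnk_rec a b q n k * basis_fps a b q n $ m)
        = Bnk_rec a b q m k + (\<Sum>n=k..<m. Bnk_rec a b q n k * basis_fps a b q n $ m)"
      by (simp add: sum.last_plus)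
    with False show ?thesis
      by (subst (asm) Bnk_rec.simps) simp
  qed simp
qed (simp add: Bnk_rec.simps)

lemma is_B_family_unique:
  assumes B: "is_B_family a b q B" and B': "is_B_family a b q B'"
  shows "B = B'"
proof (intro ext)
  fix n k
  show "B n k = B' n k"
  proof (cases "n < k")
    case False
    show ?thesis
    proof (rule basis_expansion_unique[where c = "\<lambda>j. B j k" and d = "\<lambda>j. B' j k"])
      fix m
      have "fps_X ^ k $ m = (\<Sum>j=k..m. B j k * basis_fps a b q j $ m)"
        and "fps_X ^ k $ m = (\<Sum>j=k..m. B' j k * basis_fps a b q j $ m)"
        using B B' by (simp_all add: is_B_family_def)
      then show "(\<Sum>j=k..m. B j k * basis_fps a b q j $ m)
          = (\<Sum>j=k..m. B' j k * basis_fps a b q j $ m)"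
        by simp
    qed (use False in simp)
  qed (use B B' in \<open>simp add: is_B_family_def\<close>)
qed

lemma is_B_family_Bnk: "is_B_family a b q (Bnk a b q)"
  unfolding Bnk_def
  by (rule theI[where P = "is_B_family a b q", OF is_B_family_Bnk_rec])
    (rule is_B_family_unique[OF _ is_B_family_Bnk_rec])

lemma Bnk_expansion: "fps_X ^ k $ m = (\<Sum>n=k..m. Bnk a b q n k * basis_fps a b q n $ m)"
  using is_B_family_Bnk by (simp add: is_B_family_def)

lemma Bnk_eq_0: "n < k \<Longrightarrow> Bnk a b q n k = 0"
  using is_B_family_Bnk by (simp add: is_B_family_def)

lemma Bnk_eqI:
  assumes "\<And>m. fps_X ^ k $ m = (\<Sum>n=k..m. c n * basis_fps a b q n $ m)" and "k \<le> n"
  shows "Bnk a b q n k = c n"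
proof (rule basis_expansion_unique[OF _ \<open>k \<le> n\<close>])
  show "(\<Sum>j=k..m. Bnk a b q j k * basis_fps a b q j $ m)
      = (\<Sum>j=k..m. c j * basis_fps a b q j $ m)" for m
    by (simp flip: assms(1) Bnk_expansion)
qed

lemma Bnk_scale: "Bnk (a * t) (b * t) q n k = Bnk a b q n k * t ^ (n - k)"
proof (cases "n < k")
  case False
  have "fps_X ^ k $ m = (\<Sum>j=k..m. Bnk a b q j k * t ^ (j - k) * basis_fps (a * t) (b * t) q j $ m)" for m
  proof -
    have "(\<Sum>j=k..m. Bnk a b q j k * t ^ (j - k) * basis_fps (a * t) (b * t) q j $ m)
        = t ^ (m - k) * (\<Sum>j=k..m. Bnk a b q j k * basis_fps a b q j $ m)"
      unfolding sum_distrib_left basis_fps_scale_nth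
      by (intro sum.cong refl) (auto simp: power_add[symmetric] mult_ac)
    also have "\<dots> = t ^ (m - k) * fps_X ^ k $ m"
      by (simp flip: Bnk_expansion)
    also have "\<dots> = fps_X ^ k $ m"
      by (simp add: fps_X_power_iff)
    finally show ?thesis ..
  qed
  with False show ?thesis
    by (intro Bnk_eqI) simp_all
qed (simp add: Bnk_eq_0)

lemma fps_X_mult_basis_fps_nth:
  "(fps_X * basis_fps a b q i) $ m
     = (\<Sum>n=Suc i..m. Bnk (a * q ^ i) (b * q ^ i) q (n - i) 1 * basis_fps a b q n $ m)"
proof -
  define B where "B j = Bnk (a * q ^ i) (b * q ^ i) q j 1" for j
  define T where "T = (\<Sum>j=1..m. fps_const (B j) * basis_fps (a * q ^ i) (b * q ^ i) q j)"
  have "T $ r = fps_X $ r" if "r \<le> m" for r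
  proof -
    have "T $ r = (\<Sum>j=1..r. B j * basis_fps (a * q ^ i) (b * q ^ i) q j $ r)"
      unfolding T_def fps_sum_nth fps_mult_left_const_nth using that
      by (intro sum.mono_neutral_right) (auto simp: basis_fps_nth)
    also have "\<dots> = fps_X ^ 1 $ r"
      unfolding B_def by (rule Bnk_expansion[symmetric])
    finally show ?thesis
      by simp
  qed
  then have "fps_cutoff (Suc m) fps_X = fps_cutoff (Suc m) T"
    by (simp add: fps_cutoff_eq_fps_cutoff_iff)
  then have "(fps_X * basis_fps a b q i) $ m = (basis_fps a b q i * T) $ m"
    by (metis fps_cutoff_right_mult_nth lessI mult.commute)
  also have "basis_fps a b q i * T = (\<Sum>j=1..m. fps_const (B j) * basis_fps a b q (i + j))"
    by (simp add: T_def sum_distrib_left basis_fps_add mult_ac)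
  also have "\<dots> $ m = (\<Sum>n=Suc i..m + i. B (n - i) * basis_fps a b q n $ m)"
    using sum.shift_bounds_cl_nat_ivl[of "\<lambda>n. B (n - i) * basis_fps a b q n $ m" 1 i m]
    by (simp add: fps_sum_nth add.commute)
  also have "\<dots> = (\<Sum>n=Suc i..m. B (n - i) * basis_fps a b q n $ m)"
    by (intro sum.mono_neutral_right) (auto simp: basis_fps_nth)
  finally show ?thesis
    by (simp add: B_def)
qed

lemma fps_cutoff_Suc:
  "fps_cutoff (Suc n) f = fps_cutoff n f + fps_const (f $ n) * fps_X ^ n"
  by (rule fps_ext) (auto simp: fps_X_power_iff less_Suc_eq)

lemma fps_cutoff_Suc_mult_linear:
  fixes f :: "'a :: comm_ring_1 fps"
  shows "fps_cutoff (Suc n) (f * (1 - fps_const c * fps_X))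
    = fps_cutoff n f * (1 - fps_const c * fps_X) + fps_const (f $ n) * fps_X ^ n"
  by (rule fps_ext) (auto simp: ring_distribs fps_X_power_iff mult.assoc[symmetric] mult.commute[of _ fps_X])

definition qpoch_quot :: "complex \<Rightarrow> complex \<Rightarrow> complex \<Rightarrow> nat \<Rightarrow> complex fps" where
  "qpoch_quot a b q n = qpoch_fps b q n * inverse (qpoch_fps a q (Suc n))"

lemma qpoch_cutoff_step:
  "fps_cutoff (Suc (Suc p)) (qpoch_ratio b a q (Suc p)) * qpoch_ratio a b q (Suc p)
     - fps_cutoff (Suc p) (qpoch_ratio b a q p) * qpoch_ratio a b q p
   = fps_const (qpoch_quot a b q p $ Suc p) * basis_fps a b q (Suc p)
     - fps_const (a * q ^ p * qpoch_quot a b q p $ p) * (fps_X * basis_fps a b q p)"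
proof -
  define R where "R = qpoch_quot a b q p"
  define L where "L c = 1 - fps_const c * fps_X" for c :: complex
  define G where "G = qpoch_ratio a b q"
  have ratio_Suc: "qpoch_ratio b a q (Suc p) = R * L (b * q ^ p)"
    by (simp add: R_def L_def qpoch_quot_def qpoch_ratio_def qpoch_fps_Suc mult_ac)
  have "R * L (a * q ^ p) = qpoch_ratio b a q p * (inverse (L (a * q ^ p)) * L (a * q ^ p))"
    by (simp add: R_def L_def qpoch_quot_def qpoch_ratio_def qpoch_fps_Suc fps_inverse_mult mult_ac)
  then have ratio: "qpoch_ratio b a q p = R * L (a * q ^ p)"
    by (simp add: L_def inverse_mult_eq_1)
  have shift: "G (Suc p) * L (b * q ^ p) = G p * L (a * q ^ p)"
    unfolding G_def L_def by (rule qpoch_ratio_Suc_mult)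
  have "fps_cutoff (Suc (Suc p)) (qpoch_ratio b a q (Suc p)) * G (Suc p)
      = (fps_cutoff (Suc p) R * L (b * q ^ p) + fps_const (R $ Suc p) * fps_X ^ Suc p) * G (Suc p)"
    by (simp only: ratio_Suc L_def fps_cutoff_Suc_mult_linear)
  also have "\<dots> = fps_cutoff (Suc p) R * (G (Suc p) * L (b * q ^ p))
      + fps_const (R $ Suc p) * basis_fps a b q (Suc p)"
    by (simp add: G_def basis_fps_eq algebra_simps)
  also have "\<dots> = (fps_cutoff p R + fps_const (R $ p) * fps_X ^ p) * (G p * L (a * q ^ p))
      + fps_const (R $ Suc p) * basis_fps a b q (Suc p)"
    by (simp only: shift fps_cutoff_Suc)
  finally have W_Suc: "fps_cutoff (Suc (Suc p)) (qpoch_ratio b a q (Suc p)) * G (Suc p) = \<dots>" .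
  have W: "fps_cutoff (Suc p) (qpoch_ratio b a q p) * G p
      = (fps_cutoff p R * L (a * q ^ p) + fps_const (R $ p) * fps_X ^ p) * G p"
    by (simp only: ratio L_def fps_cutoff_Suc_mult_linear)
  show ?thesis
    unfolding G_def[symmetric] R_def[symmetric] W_Suc W
    by (simp add: G_def L_def basis_fps_eq algebra_simps)
qed

lemma qpoch_quot_telescope_nth:
  "(\<Sum>p<m. qpoch_quot a b q p $ Suc p * basis_fps a b q (Suc p) $ m)
     = a * (\<Sum>p<m. q ^ p * qpoch_quot a b q p $ p * (fps_X * basis_fps a b q p) $ m)"
proof -
  define W where "W p = fps_cutoff (Suc p) (qpoch_ratio b a q p) * qpoch_ratio a b q p" for p
  have step: "W (Suc p) - W p = fps_const (qpoch_quot a b q p $ Suc p) * basis_fps a b q (Suc p)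
      - fps_const (a * q ^ p * qpoch_quot a b q p $ p) * (fps_X * basis_fps a b q p)" for p
    unfolding W_def by (rule qpoch_cutoff_step)
  have "(\<Sum>p<m. fps_const (qpoch_quot a b q p $ Suc p) * basis_fps a b q (Suc p)
      - fps_const (a * q ^ p * qpoch_quot a b q p $ p) * (fps_X * basis_fps a b q p))
      = (\<Sum>p<m. W (Suc p) - W p)"
    by (simp only: step)
  also have "\<dots> = W m - W 0"
    by (rule sum_lessThan_telescope)
  also have "W 0 = 1"
    by (simp add: W_def qpoch_ratio_def fps_cutoff_one)
  finally have telescope: "(\<Sum>p<m. fps_const (qpoch_quot a b q p $ Suc p) * basis_fps a b q (Suc p)
      - fps_const (a * q ^ p * qpoch_quot a b q p $ p) * (fps_X * basis_fps a b q p)) = W m - 1" .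
  have "W m $ m = 1 $ m"
    by (simp add: W_def fps_cutoff_left_mult_nth qpoch_ratio_mult_swap[of b a])
  with telescope have "(\<Sum>p<m. fps_const (qpoch_quot a b q p $ Suc p) * basis_fps a b q (Suc p)
      - fps_const (a * q ^ p * qpoch_quot a b q p $ p) * (fps_X * basis_fps a b q p)) $ m = 0"
    by simp
  then have "(\<Sum>p<m. qpoch_quot a b q p $ Suc p * basis_fps a b q (Suc p) $ m)
      - (\<Sum>p<m. a * q ^ p * qpoch_quot a b q p $ p * (fps_X * basis_fps a b q p) $ m) = 0"
    by (simp only: fps_sum_nth fps_sub_nth fps_mult_left_const_nth sum_subtractf)
  then show ?thesis
    by (simp add: sum_distrib_left mult.assoc)
qed

lemma qpoch_quot_basis_expansion:
  "(\<Sum>n=1..m. qpoch_quot a b q (n - 1) $ n * basis_fps a b q n $ m)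
     = (\<Sum>n=1..m. a * (\<Sum>i<n. Bnk a b q (n - i) 1 * q ^ ((n - i) * i) * qpoch_quot a b q i $ i)
          * basis_fps a b q n $ m)"
proof -
  have q_power: "q ^ i * (q ^ i) ^ (n - i - 1) = q ^ ((n - i) * i)" if "i < n" for i n
  proof -
    from that have "Suc (n - i - 1) = n - i"
      by simp
    then have "q ^ i * (q ^ i) ^ (n - i - 1) = (q ^ i) ^ (n - i)"
      by (metis power_Suc)
    then show ?thesis
      by (simp add: power_mult mult.commute)
  qed
  have "(\<Sum>n=1..m. qpoch_quot a b q (n - 1) $ n * basis_fps a b q n $ m)
      = (\<Sum>p<m. qpoch_quot a b q p $ Suc p * basis_fps a b q (Suc p) $ m)"
    by (simp add: sum.atLeast1_atMost_eq)
  also have "\<dots> = a * (\<Sum>p<m. q ^ p * qpoch_quot a b q p $ p * (fps_X * basis_fps a b q p) $ m)"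
    by (rule qpoch_quot_telescope_nth)
  also have "\<dots> = (\<Sum>p<m. \<Sum>n=Suc p..m.
      a * (Bnk a b q (n - p) 1 * q ^ ((n - p) * p) * qpoch_quot a b q p $ p) * basis_fps a b q n $ m)"
    unfolding fps_X_mult_basis_fps_nth Bnk_scale sum_distrib_left
  proof (intro sum.cong refl)
    fix p n
    assume "n \<in> {Suc p..m}"
    then have power_eq: "q ^ p * (q ^ p) ^ (n - p - 1) = q ^ ((n - p) * p)"
      by (intro q_power) auto
    show "a * (q ^ p * qpoch_quot a b q p $ p
          * (Bnk a b q (n - p) 1 * (q ^ p) ^ (n - p - 1) * basis_fps a b q n $ m))
        = a * (Bnk a b q (n - p) 1 * q ^ ((n - p) * p) * qpoch_quot a b q p $ p) * basis_fps a b q n $ m"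
      unfolding power_eq[symmetric] by (simp add: mult_ac)
  qed
  also have "\<dots> = (\<Sum>n\<le>m. \<Sum>p<n.
      a * (Bnk a b q (n - p) 1 * q ^ ((n - p) * p) * qpoch_quot a b q p $ p) * basis_fps a b q n $ m)"
    by (rule sum.nested_swap'[symmetric])
  also have "\<dots> = (\<Sum>n=1..m. a * (\<Sum>i<n. Bnk a b q (n - i) 1 * q ^ ((n - i) * i) * qpoch_quot a b q i $ i)
          * basis_fps a b q n $ m)"
    by (simp add: atMost_atLeast0 sum.atLeast_Suc_atMost sum_distrib_left sum_distrib_right)
  finally show ?thesis .
qed

theorem mainTheorem6:
  fixes a b q t :: complex and n k :: nat
  assumes "q \<noteq> 0" and "1 \<le> n" and "k \<le> n"
  shows "Bnk (a * t) (b * t) q n k = Bnk a b q n k * t ^ (n - k)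
    \<and> fps_nth (qpoch_fps b q (n - 1) * inverse (qpoch_fps a q n)) n
        = a * (\<Sum>i<n. Bnk a b q (n - i) 1 * q ^ ((n - i) * i)
                 * fps_nth (qpoch_fps b q i * inverse (qpoch_fps a q (i + 1))) i)"
proof
  show "Bnk (a * t) (b * t) q n k = Bnk a b q n k * t ^ (n - k)"
    by (rule Bnk_scale)
next
  have "qpoch_quot a b q (n - 1) $ n
      = a * (\<Sum>i<n. Bnk a b q (n - i) 1 * q ^ ((n - i) * i) * qpoch_quot a b q i $ i)"
    using qpoch_quot_basis_expansion \<open>1 \<le> n\<close> by (rule basis_expansion_unique)
  with \<open>1 \<le> n\<close> show "fps_nth (qpoch_fps b q (n - 1) * inverse (qpoch_fps a q n)) n
      = a * (\<Sum>i<n. Bnk a b q (n - i) 1 * q ^ ((n - i) * i)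
               * fps_nth (qpoch_fps b q i * inverse (qpoch_fps a q (i + 1))) i)"
    by (simp add: qpoch_quot_def)
qed

end
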